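(* Let $(E,\tau)$ be a locally solid vector lattice, where $\tau$ is a uo-Lebesgue topology. Suppose that $C_\tau=E$ or, equivalently, that $E$ has the countable sup property (this holds in particular when $C_\tau$ has a countable order basis, or when $\tau$ is metrisable). Then: (1) every $\tau$-convergent net in $E$ has an embedded sequence that is uo-convergent as well as $\tau$-convergent to the same limit; (2) a sequence in $E$ is $\tau$-convergent to $x\in E$ if and only if every subsequence has a further subsequence that is uo-convergent to $x$.
   Context: All vector lattices are real and Archimedean; linear topologies are Hausdorff. A locally solid topology on a vector lattice is a linear topology such that zero has a neighbourhood basis of solid sets. A net $(x_\alpha)$ order converges to $x$ if there is a net $y_\beta\downarrow0$ such that for each $\beta_0$ eventually $|x_\alpha-x|\leq y_{\beta_0}$; it uo-converges to $x$ if $|x_\alpha-x|\wedge|y|$ order converges to $0$ for every $y\in E$. A uo-Lebesgue topology is a locally solid topology in which every uo-convergent net converges topologically to the same limit. A sequence $(V_n)$ of neighbourhoods of zero is normal if $V_{n+1}+V_{n+1}\subseteq V_n$; the carrier $C_\tau$ is the union of the disjoint complements $N^{\mathrm d}$ where $N=\bigcap_nV_n$ ranges over intersections of normal sequences of solid $\tau$-neighbourhoods of zero. An order basis of a vector lattice $G$ is a non-empty $A\subseteq G$ with $A^{\mathrm d}=\{0\}$. $E$ has the countable sup property if every subset with a supremum contains an at most countable subset with the same supremum. Embedded sequence: given a net $(x_\alpha)_{\alpha\in A}$, a sequence $(x_{\alpha_n})_{n\geq1}$ with $\alpha_1\leq\alpha_2\leq\dotsb$, strictly increasing when $A$ has no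 largest element. *)

theory Defs
  imports "HOL-Analysis.Analysis"
begin

text \<open>Archimedean property is an explicit hypothesis.  Nets are modelled as in Isabelle
  by filters on an index type; a net over a directed set (I, le) uses net_filter I le.\<close>

definition labs :: "'a::{ordered_real_vector,lattice} \<Rightarrow> 'a" where
  "labs x = sup x (- x)"

definition archimedean_vl :: "'a::{ordered_real_vector,lattice} itself \<Rightarrow> bool" where
  "archimedean_vl _ \<longleftrightarrow>
     (\<forall>x y::'a. 0 \<le> x \<and> (\<forall>n::nat. real n *\<^sub>R x \<le> y) \<longrightarrow> x = 0)"

definition is_sup_of :: "'a::order set \<Rightarrow> 'a \<Rightarrow> bool" where
  "is_sup_of S s \<longleftrightarrow> (\<forall>x\<in>S. x \<le> s) \<and> (\<forall>u. (\<forall>x\<in>S. x \<le> u) \<longrightarrow> s \<le> u)"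

definition is_inf_of :: "'a::order set \<Rightarrow> 'a \<Rightarrow> bool" where
  "is_inf_of S s \<longleftrightarrow> (\<forall>x\<in>S. s \<le> x) \<and> (\<forall>u. (\<forall>x\<in>S. u \<le> x) \<longrightarrow> u \<le> s)"

definition countable_sup_property :: "'a::{ordered_real_vector,lattice} itself \<Rightarrow> bool" where
  "countable_sup_property _ \<longleftrightarrow>
     (\<forall>(S::'a set) s. is_sup_of S s \<longrightarrow> (\<exists>T\<subseteq>S. countable T \<and> is_sup_of T s))"

definition directed_set :: "'i set \<Rightarrow> ('i \<Rightarrow> 'i \<Rightarrow> bool) \<Rightarrow> bool" where
  "directed_set I le \<longleftrightarrow> I \<noteq> {} \<and> (\<forall>a\<in>I. le a a)
     \<and> (\<forall>a\<in>I. \<forall>b\<in>I. \<forall>c\<in>I. le a b \<and> le b c \<longrightarrow> le a c)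
     \<and> (\<forall>a\<in>I. \<forall>b\<in>I. \<exists>c\<in>I. le a c \<and> le b c)"

definition net_filter :: "'i set \<Rightarrow> ('i \<Rightarrow> 'i \<Rightarrow> bool) \<Rightarrow> 'i filter" where
  "net_filter I le = (INF a\<in>I. principal {b\<in>I. le a b})"

text \<open>The dominating net y_beta \<down> 0 is represented by its range D, a nonempty
  downward directed set with infimum 0 (every such set is a net decreasing to 0,
  indexed by itself).\<close>
definition order_conv :: "'i filter \<Rightarrow> ('i \<Rightarrow> 'a::{ordered_real_vector,lattice}) \<Rightarrow> 'a \<Rightarrow> bool" where
  "order_conv F f x \<longleftrightarrow>
     (\<exists>D::'a set. D \<noteq> {} \<and> (\<forall>a\<in>D. \<forall>b\<in>D. \<exists>c\<in>D. c \<le> a \<and> c \<le> b)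
        \<and> is_inf_of D 0
        \<and> (\<forall>d\<in>D. eventually (\<lambda>i. labs (f i - x) \<le> d) F))"

definition uo_conv :: "'i filter \<Rightarrow> ('i \<Rightarrow> 'a::{ordered_real_vector,lattice}) \<Rightarrow> 'a \<Rightarrow> bool" where
  "uo_conv F f x \<longleftrightarrow> (\<forall>y. order_conv F (\<lambda>i. inf (labs (f i - x)) (labs y)) 0)"

definition top_conv :: "'a topology \<Rightarrow> 'i filter \<Rightarrow> ('i \<Rightarrow> 'a) \<Rightarrow> 'a \<Rightarrow> bool" where
  "top_conv \<tau> F f x \<longleftrightarrow> (\<forall>U. openin \<tau> U \<and> x \<in> U \<longrightarrow> eventually (\<lambda>i. f i \<in> U) F)"

definition solid :: "'a::{ordered_real_vector,lattice} set \<Rightarrow> bool" where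
  "solid S \<longleftrightarrow> (\<forall>x\<in>S. \<forall>y. labs y \<le> labs x \<longrightarrow> y \<in> S)"

definition nhd0 :: "'a::real_vector topology \<Rightarrow> 'a set \<Rightarrow> bool" where
  "nhd0 \<tau> V \<longleftrightarrow> (\<exists>U. openin \<tau> U \<and> 0 \<in> U \<and> U \<subseteq> V)"

definition linear_topology :: "'a::real_vector topology \<Rightarrow> bool" where
  "linear_topology \<tau> \<longleftrightarrow> topspace \<tau> = UNIV \<and> Hausdorff_space \<tau>
     \<and> continuous_map (prod_topology \<tau> \<tau>) \<tau> (\<lambda>(x, y). x + y)
     \<and> continuous_map (prod_topology euclideanreal \<tau>) \<tau> (\<lambda>(c, x). c *\<^sub>R x)"

definition locally_solid :: "'a::{ordered_real_vector,lattice} topology \<Rightarrow> bool" where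
  "locally_solid \<tau> \<longleftrightarrow> linear_topology \<tau>
     \<and> (\<forall>V. nhd0 \<tau> V \<longrightarrow> (\<exists>W. nhd0 \<tau> W \<and> solid W \<and> W \<subseteq> V))"

text \<open>Nets are represented by filters (every net determines the filter of its tails, and
  both uo- and topological convergence only depend on that image filter; every filter
  on E arises this way); so we quantify over all filters on E with the identity map.\<close>
definition uo_Lebesgue :: "'a::{ordered_real_vector,lattice} topology \<Rightarrow> bool" where
  "uo_Lebesgue \<tau> \<longleftrightarrow> locally_solid \<tau>
     \<and> (\<forall>(F::'a filter) x. uo_conv F id x \<longrightarrow> top_conv \<tau> F id x)"

definition disj_compl :: "'a::{ordered_real_vector,lattice} set \<Rightarrow> 'a set" where
  "disj_compl N = {x. \<forall>y\<in>N. inf (labs x) (labs y) = 0}"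

definition normal_seq :: "('a::real_vector) topology \<Rightarrow> (nat \<Rightarrow> 'a set) \<Rightarrow> bool" where
  "normal_seq \<tau> V \<longleftrightarrow> (\<forall>n. nhd0 \<tau> (V n) \<and> {a + b | a b. a \<in> V (Suc n) \<and> b \<in> V (Suc n)} \<subseteq> V n)"

definition carrier_top :: "'a::{ordered_real_vector,lattice} topology \<Rightarrow> 'a set" where
  "carrier_top \<tau> = (\<Union>{disj_compl (\<Inter>n. V n) | V. normal_seq \<tau> V \<and> (\<forall>n. solid (V n))})"

definition embedded_seq :: "'i set \<Rightarrow> ('i \<Rightarrow> 'i \<Rightarrow> bool) \<Rightarrow> (nat \<Rightarrow> 'i) \<Rightarrow> bool" where
  "embedded_seq I le \<alpha> \<longleftrightarrow> (\<forall>n. \<alpha> n \<in> I \<and> le (\<alpha> n) (\<alpha> (Suc n)))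
     \<and> ((\<not> (\<exists>m\<in>I. \<forall>a\<in>I. le a m)) \<longrightarrow> (\<forall>n. \<not> le (\<alpha> (Suc n)) (\<alpha> n)))"

end

theory Submission
  imports Defs "HOL-Library.Lattice_Algebras"
begin

text \<open>Write \<open>N = \<Inter>n. V n\<close> for a normal sequence \<open>V\<close> of solid neighbourhoods of zero.
  The heart of the proof is that a sequence with \<open>y n \<in> V n\<close> and \<open>y n \<bottom> N\<close> is uo-null:
  if \<open>0 \<le> w\<close> lies below every eventual upper bound of \<open>\<bar>y n\<bar> \<sqinter> u\<close>, then \<open>w\<close> is the supremum
  of the increasing sums \<open>w \<sqinter> (\<Sum>j+2 \<le> k < n. \<bar>y k\<bar> \<sqinter> u)\<close>, which lie in \<open>V (j+1)\<close>, so order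
  continuity of the uo-Lebesgue topology puts \<open>w\<close> into every \<open>V j\<close>. Then \<open>w \<in> N\<close> is disjoint
  from all \<open>\<bar>y n\<bar> \<sqinter> u\<close>, and the Archimedean property forces \<open>w = 0\<close>.

  If \<open>C\<^sub>\<tau> = E\<close>, every element is disjoint from the null set \<open>N\<close> of some normal sequence, so
  along a \<open>\<tau>\<close>-convergent net we can pick indices recursively such that the \<open>n\<close>-th difference
  lies in the \<open>n\<close>-th term of a diagonal normal sequence whose null set is disjoint from all
  differences. Under the countable sup property \<open>C\<^sub>\<tau> = E\<close>: \<open>C\<^sub>\<tau>\<close> is an ideal with trivial
  disjoint complement (order continuity again), so each \<open>\<bar>e\<bar>\<close> is the supremum of a countable subset
  of \<open>C\<^sub>\<tau>\<close>, whose countably many normal sequences merge diagonally. Part (2) follows by applying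
  (1) to subsequences, since uo-convergence implies \<open>\<tau>\<close>-convergence.\<close>

interpretation vl: lattice_ab_group_add_abs labs "(+)" "0::'a::{ordered_real_vector,lattice}"
    "(-)" uminus "(\<le>)" "(<)" inf sup
  by unfold_locales (rule labs_def)

text \<open>The library normalises differences such as \<open>t - inf v t\<close> into suprema; keep them.\<close>

declare vl.neg_inf_eq_sup [simp del] vl.neg_sup_eq_inf [simp del]
  vl.diff_inf_eq_sup [simp del] vl.diff_sup_eq_inf [simp del]

lemma archimedean_vlD:
  fixes x y :: "'a::{ordered_real_vector,lattice}"
  assumes "archimedean_vl TYPE('a)" "0 \<le> x" "\<And>n. real n *\<^sub>R x \<le> y"
  shows "x = 0"
  using assms unfolding archimedean_vl_def by blast

lemma inf_add_le_add_inf: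
  fixes a b c :: "'a::{ordered_real_vector,lattice}"
  assumes "0 \<le> a" "0 \<le> b" "0 \<le> c"
  shows "inf (a + b) c \<le> inf a c + inf b c"
proof -
  have "inf a c + inf b c = inf (inf (a + b) (a + c)) (inf (c + b) (c + c))"
    by (simp add: vl.add_inf_distrib_left vl.add_inf_distrib_right inf_aci)
  moreover have "inf (a + b) c \<le> inf (inf (a + b) (a + c)) (inf (c + b) (c + c))"
    using assms by (auto intro!: le_infI simp: le_infI1 le_infI2 add_increasing add_increasing2)
  ultimately show ?thesis by simp
qed

lemma archimedean_eventually_le_descent:
  fixes z :: "'i \<Rightarrow> 'a::{ordered_real_vector,lattice}"
  assumes arch: "archimedean_vl TYPE('a)" and "0 \<le> t"
    and bound: "\<forall>\<^sub>F k in F. z k \<le> u"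
    and below: "\<And>d. (\<forall>\<^sub>F k in F. z k \<le> d) \<Longrightarrow> w \<le> d"
    and step: "\<And>U. (\<forall>\<^sub>F k in F. z k \<le> U) \<Longrightarrow> w \<le> U \<Longrightarrow> \<forall>\<^sub>F k in F. z k \<le> U - t"
  shows "t = 0"
proof (rule archimedean_vlD[OF arch \<open>0 \<le> t\<close>])
  have ev: "\<forall>\<^sub>F k in F. z k \<le> u - real n *\<^sub>R t" for n
  proof (induction n)
    case 0
    show ?case using bound by simp
  next
    case (Suc n)
    then have "\<forall>\<^sub>F k in F. z k \<le> u - real n *\<^sub>R t - t"
      using below step by blast
    then show ?case by (simp add: algebra_simps)
  qed
  show "real n *\<^sub>R t \<le> u - w" for n
    using below[OF ev[of n]] by (simp add: algebra_simps)
qed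

section \<open>Order convergence\<close>

lemma order_conv_nonneg_zeroI:
  fixes z :: "'i \<Rightarrow> 'a::{ordered_real_vector,lattice}"
  assumes "F \<noteq> bot" and nonneg: "\<And>i. 0 \<le> z i" and bound: "\<forall>\<^sub>F i in F. z i \<le> u"
    and inf0: "\<And>w. 0 \<le> w \<Longrightarrow> (\<And>d. (\<forall>\<^sub>F i in F. z i \<le> d) \<Longrightarrow> w \<le> d) \<Longrightarrow> w = 0"
  shows "order_conv F z 0"
  unfolding order_conv_def
proof (intro exI conjI)
  define D where "D = {d. \<forall>\<^sub>F i in F. z i \<le> d}"
  have D_nonneg: "0 \<le> d" if "d \<in> D" for d
  proof -
    have "\<forall>\<^sub>F i in F. z i \<le> d" using that unfolding D_def by blast
    then have "\<forall>\<^sub>F i in F. 0 \<le> d"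
      by (rule eventually_mono) (use nonneg in \<open>blast intro: order_trans\<close>)
    then show ?thesis using \<open>F \<noteq> bot\<close> by (simp add: eventually_const_iff)
  qed
  show "D \<noteq> {}" using bound unfolding D_def by blast
  show "\<forall>a\<in>D. \<forall>b\<in>D. \<exists>c\<in>D. c \<le> a \<and> c \<le> b"
  proof (intro ballI)
    fix a b assume "a \<in> D" "b \<in> D"
    then have "inf a b \<in> D"
      unfolding D_def by (auto elim: eventually_elim2)
    then show "\<exists>c\<in>D. c \<le> a \<and> c \<le> b" by (intro bexI[of _ "inf a b"]) auto
  qed
  show "is_inf_of D 0"
    unfolding is_inf_of_def
  proof (intro conjI allI impI ballI D_nonneg)
    fix w assume "\<forall>d\<in>D. w \<le> d"
    then have "sup w 0 = 0"
      using D_nonneg by (intro inf0) (auto simp: D_def)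
    then show "w \<le> 0" by (metis sup_ge1)
  qed
  show "\<forall>d\<in>D. \<forall>\<^sub>F i in F. labs (z i - 0) \<le> d"
    using nonneg by (simp add: D_def)
qed

lemma uo_conv_if_order_conv:
  assumes "order_conv F f x"
  shows "uo_conv F f x"
  unfolding uo_conv_def
proof
  fix y
  obtain D where D: "D \<noteq> {}" "\<forall>a\<in>D. \<forall>b\<in>D. \<exists>c\<in>D. c \<le> a \<and> c \<le> b" "is_inf_of D 0"
    and dom: "\<forall>d\<in>D. \<forall>\<^sub>F i in F. labs (f i - x) \<le> d"
    using assms unfolding order_conv_def by blast
  have "\<forall>\<^sub>F i in F. labs (inf (labs (f i - x)) (labs y) - 0) \<le> d" if "d \<in> D" for d
    using dom that by (auto elim!: eventually_mono intro: le_infI1)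
  with D show "order_conv F (\<lambda>i. inf (labs (f i - x)) (labs y)) 0"
    unfolding order_conv_def by blast
qed

lemma uo_Lebesgue_top_conv:
  assumes "uo_Lebesgue \<tau>" "uo_conv F f x"
  shows "top_conv \<tau> F f x"
proof -
  have "uo_conv (filtermap f F) id x"
    using assms(2) unfolding uo_conv_def order_conv_def by (simp add: eventually_filtermap)
  then have "top_conv \<tau> (filtermap f F) id x"
    using assms(1) unfolding uo_Lebesgue_def by blast
  then show ?thesis unfolding top_conv_def by (simp add: eventually_filtermap)
qed

lemma directed_set_leI:
  fixes S :: "'a::preorder set"
  assumes "S \<noteq> {}" "\<And>a b. a \<in> S \<Longrightarrow> b \<in> S \<Longrightarrow> \<exists>c\<in>S. a \<le> c \<and> b \<le> c"
  shows "directed_set S (\<le>)"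
  using assms unfolding directed_set_def by (blast intro: order_trans)

lemma directed_setD:
  "directed_set I le \<Longrightarrow> a \<in> I \<Longrightarrow> b \<in> I \<Longrightarrow> \<exists>c\<in>I. le a c \<and> le b c"
  unfolding directed_set_def by blast

lemma eventually_net_filter:
  assumes dir: "directed_set I le"
  shows "eventually P (net_filter I le) \<longleftrightarrow> (\<exists>a\<in>I. \<forall>b\<in>I. le a b \<longrightarrow> P b)"
proof -
  have "eventually P (net_filter I le) \<longleftrightarrow> (\<exists>a\<in>I. eventually P (principal {b\<in>I. le a b}))"
    unfolding net_filter_def
  proof (rule eventually_INF_base)
    show "I \<noteq> {}" using dir unfolding directed_set_def by blast
    fix a b assume "a \<in> I" "b \<in> I"
    then obtain c where "c \<in> I" "le a c" "le b c"
      using directed_setD[OF dir] by blast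
    moreover have "{d\<in>I. le c d} \<subseteq> {d\<in>I. le a d} \<inter> {d\<in>I. le b d}"
      using dir \<open>a \<in> I\<close> \<open>b \<in> I\<close> \<open>c \<in> I\<close> \<open>le a c\<close> \<open>le b c\<close>
      unfolding directed_set_def by blast
    ultimately show "\<exists>c\<in>I. principal {d\<in>I. le c d}
        \<le> inf (principal {d\<in>I. le a d}) (principal {d\<in>I. le b d})"
      by (auto simp: inf_principal)
  qed
  then show ?thesis by (auto simp: eventually_principal)
qed

lemma order_conv_directed_sup:
  fixes S :: "'a::{ordered_real_vector,lattice} set"
  assumes dir: "directed_set S (\<le>)" and sup: "is_sup_of S t"
  shows "order_conv (net_filter S (\<le>)) id t"
  unfolding order_conv_def
proof (intro exI conjI)
  let ?D = "(\<lambda>s. t - s) ` S"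
  have ub: "s \<le> t" if "s \<in> S" for s using sup that unfolding is_sup_of_def by blast
  show "?D \<noteq> {}" using dir unfolding directed_set_def by blast
  show "\<forall>a\<in>?D. \<forall>b\<in>?D. \<exists>c\<in>?D. c \<le> a \<and> c \<le> b"
  proof (intro ballI)
    fix a b assume "a \<in> ?D" "b \<in> ?D"
    then obtain a' b' where "a' \<in> S" "b' \<in> S" "a = t - a'" "b = t - b'" by blast
    moreover obtain c where "c \<in> S" "a' \<le> c" "b' \<le> c"
      using directed_setD[OF dir \<open>a' \<in> S\<close> \<open>b' \<in> S\<close>] by blast
    ultimately show "\<exists>c\<in>?D. c \<le> a \<and> c \<le> b" by auto
  qed
  show "is_inf_of ?D 0"
    unfolding is_inf_of_def
  proof (intro conjI allI impI ballI)
    show "0 \<le> d" if "d \<in> ?D" for d using that ub by auto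
    fix w assume "\<forall>d\<in>?D. w \<le> d"
    then have "\<forall>s\<in>S. s \<le> t - w" by (auto simp: algebra_simps le_diff_eq)
    then have "t \<le> t - w" using sup unfolding is_sup_of_def by blast
    then show "w \<le> 0" by (simp add: le_diff_eq)
  qed
  show "\<forall>d\<in>?D. \<forall>\<^sub>F y in net_filter S (\<le>). labs (id y - t) \<le> d"
  proof
    fix d assume "d \<in> ?D"
    then obtain s where "s \<in> S" "d = t - s" by blast
    moreover have "labs (y - t) \<le> t - s" if "y \<in> S" "s \<le> y" for y
      using that ub[of y] by (simp add: vl.abs_minus_commute)
    ultimately show "\<forall>\<^sub>F y in net_filter S (\<le>). labs (id y - t) \<le> d"
      unfolding eventually_net_filter[OF dir] by auto
  qed
qed

section \<open>Linear topologies\<close>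

lemma linear_topology_topspace: "linear_topology \<tau> \<Longrightarrow> topspace \<tau> = UNIV"
  by (simp add: linear_topology_def)

lemma continuous_map_translation:
  assumes "linear_topology \<tau>"
  shows "continuous_map \<tau> \<tau> (\<lambda>x. x + c)"
proof -
  have "continuous_map \<tau> (prod_topology \<tau> \<tau>) (\<lambda>x. (x, c))"
    using assms by (intro continuous_map_pairedI) (auto simp: linear_topology_topspace)
  moreover have "continuous_map (prod_topology \<tau> \<tau>) \<tau> (\<lambda>(x, y). x + y)"
    using assms by (simp add: linear_topology_def)
  ultimately show ?thesis
    using continuous_map_compose[of \<tau> "prod_topology \<tau> \<tau>" "\<lambda>x. (x, c)" \<tau> "\<lambda>(x, y). x + y"]
    by (simp add: o_def)
qed

lemma nhd0_UNIV: "linear_topology \<tau> \<Longrightarrow> nhd0 \<tau> UNIV"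
  unfolding nhd0_def by (metis linear_topology_topspace openin_topspace UNIV_I subset_UNIV)

lemma nhd0_zero: "nhd0 \<tau> V \<Longrightarrow> 0 \<in> V"
  unfolding nhd0_def by blast

lemma nhd0_Int:
  assumes "nhd0 \<tau> U" "nhd0 \<tau> V"
  shows "nhd0 \<tau> (U \<inter> V)"
proof -
  obtain A B where "openin \<tau> A" "0 \<in> A" "A \<subseteq> U" "openin \<tau> B" "0 \<in> B" "B \<subseteq> V"
    using assms unfolding nhd0_def by blast
  then have "openin \<tau> (A \<inter> B) \<and> 0 \<in> A \<inter> B \<and> A \<inter> B \<subseteq> U \<inter> V"
    by (auto intro: openin_Int)
  then show ?thesis unfolding nhd0_def by blast
qed

lemma nhd0_half:
  assumes lt: "linear_topology \<tau>" and "nhd0 \<tau> U"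
  shows "\<exists>W. nhd0 \<tau> W \<and> (\<forall>a\<in>W. \<forall>b\<in>W. a + b \<in> U)"
proof -
  obtain U0 where U0: "openin \<tau> U0" "0 \<in> U0" "U0 \<subseteq> U"
    using assms(2) unfolding nhd0_def by blast
  have "continuous_map (prod_topology \<tau> \<tau>) \<tau> (\<lambda>(x, y). x + y)"
    using lt by (simp add: linear_topology_def)
  then have "openin (prod_topology \<tau> \<tau>) {z. (\<lambda>(x, y). x + y) z \<in> U0}"
    using openin_continuous_map_preimage[OF _ U0(1)] lt
    by (force simp: linear_topology_topspace)
  moreover have "(0, 0) \<in> {z. (\<lambda>(x, y). x + y) z \<in> U0}"
    using U0(2) by simp
  ultimately have "\<exists>A B. openin \<tau> A \<and> openin \<tau> B \<and> 0 \<in> A \<and> 0 \<in> B \<and>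
      A \<times> B \<subseteq> {z. (\<lambda>(x, y). x + y) z \<in> U0}"
    unfolding openin_prod_topology_alt by (elim allE impE) assumption
  then obtain A B where AB: "openin \<tau> A" "openin \<tau> B" "0 \<in> A" "0 \<in> B"
    "A \<times> B \<subseteq> {z. (\<lambda>(x, y). x + y) z \<in> U0}"
    by blast
  have "nhd0 \<tau> (A \<inter> B)"
    unfolding nhd0_def using AB(1-4) by (intro exI[of _ "A \<inter> B"]) (auto intro: openin_Int)
  moreover have "a + b \<in> U" if "a \<in> A \<inter> B" "b \<in> A \<inter> B" for a b
  proof -
    have "(a, b) \<in> A \<times> B" using that by simp
    then show ?thesis using AB(5) U0(3) by auto
  qed
  ultimately show ?thesis by blast
qed

lemma nhd0_separating:
  assumes "linear_topology \<tau>" "x \<noteq> 0"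
  shows "\<exists>U. nhd0 \<tau> U \<and> x \<notin> U"
proof -
  have "Hausdorff_space \<tau>" "0 \<in> topspace \<tau>" "x \<in> topspace \<tau>"
    using assms(1) by (simp_all add: linear_topology_def)
  then obtain U V where "openin \<tau> U" "openin \<tau> V" "0 \<in> U" "x \<in> V" "disjnt U V"
    using assms(2) unfolding Hausdorff_space_def by blast
  then show ?thesis unfolding nhd0_def disjnt_def by blast
qed

lemma top_conv_nhd0:
  assumes lt: "linear_topology \<tau>" and conv: "top_conv \<tau> F f x" and "nhd0 \<tau> U"
  shows "\<forall>\<^sub>F i in F. f i - x \<in> U"
proof -
  obtain U0 where U0: "openin \<tau> U0" "0 \<in> U0" "U0 \<subseteq> U"
    using assms(3) unfolding nhd0_def by blast
  have "openin \<tau> {y. y - x \<in> U0}"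
    using openin_continuous_map_preimage[OF continuous_map_translation[OF lt, of "- x"] U0(1)] lt
    by (simp add: linear_topology_topspace)
  moreover have "x \<in> {y. y - x \<in> U0}" using U0(2) by simp
  ultimately have "\<forall>\<^sub>F i in F. f i \<in> {y. y - x \<in> U0}"
    using conv unfolding top_conv_def by blast
  then show ?thesis by eventually_elim (use U0(3) in auto)
qed

section \<open>Solid sets and normal sequences\<close>

lemma solidD:
  fixes S :: "'a::{ordered_real_vector,lattice} set"
  shows "solid S \<Longrightarrow> x \<in> S \<Longrightarrow> labs y \<le> labs x \<Longrightarrow> y \<in> S"
  unfolding solid_def by blast

lemma solid_nonneg_le_abs:
  fixes S :: "'a::{ordered_real_vector,lattice} set"
  shows "solid S \<Longrightarrow> x \<in> S \<Longrightarrow> 0 \<le> y \<Longrightarrow> y \<le> labs x \<Longrightarrow> y \<in> S"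
  by (erule solidD) simp_all

lemma solid_INT:
  fixes V :: "'i \<Rightarrow> 'a::{ordered_real_vector,lattice} set"
  shows "(\<And>i. i \<in> K \<Longrightarrow> solid (V i)) \<Longrightarrow> solid (\<Inter>i\<in>K. V i)"
  unfolding solid_def by blast

lemma solid_UNIV: "solid (UNIV::'a::{ordered_real_vector,lattice} set)"
  unfolding solid_def by blast

lemma solid_disj_compl: "solid (disj_compl N)"
  unfolding solid_def
proof (intro ballI allI impI)
  fix x y assume x: "x \<in> disj_compl N" and "labs y \<le> labs x"
  show "y \<in> disj_compl N"
    unfolding disj_compl_def
  proof (intro CollectI ballI order.antisym)
    fix n assume "n \<in> N"
    have "inf (labs y) (labs n) \<le> inf (labs x) (labs n)"
      using \<open>labs y \<le> labs x\<close> by (rule inf_mono) simp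
    also have "\<dots> = 0" using x \<open>n \<in> N\<close> unfolding disj_compl_def by blast
    finally show "inf (labs y) (labs n) \<le> 0" .
  qed simp
qed

lemma zero_in_disj_compl [simp]: "0 \<in> disj_compl N"
  by (simp add: disj_compl_def inf_absorb1)

lemma disj_compl_antimono: "N \<subseteq> M \<Longrightarrow> disj_compl M \<subseteq> disj_compl N"
  unfolding disj_compl_def by blast

lemma disj_compl_add:
  assumes "a \<in> disj_compl N" "b \<in> disj_compl N"
  shows "a + b \<in> disj_compl N"
  unfolding disj_compl_def
proof (intro CollectI ballI order.antisym)
  fix n assume "n \<in> N"
  then have "inf (labs a) (labs n) = 0" "inf (labs b) (labs n) = 0"
    using assms unfolding disj_compl_def by blast+
  have "inf (labs (a + b)) (labs n) \<le> inf (labs a + labs b) (labs n)"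
    by (intro inf_mono vl.abs_triangle_ineq order_refl)
  also have "\<dots> \<le> inf (labs a) (labs n) + inf (labs b) (labs n)"
    by (intro inf_add_le_add_inf) simp_all
  finally show "inf (labs (a + b)) (labs n) \<le> 0"
    using \<open>inf (labs a) (labs n) = 0\<close> \<open>inf (labs b) (labs n) = 0\<close> by simp
qed simp

lemma disj_compl_is_sup_of:
  assumes T: "T \<subseteq> disj_compl M" and T_nonneg: "\<And>s. s \<in> T \<Longrightarrow> 0 \<le> s"
    and sup: "is_sup_of T e" and "0 \<le> e"
  shows "e \<in> disj_compl M"
  unfolding disj_compl_def
proof (intro CollectI ballI)
  fix b assume "b \<in> M"
  define c where "c = inf e (labs b)"
  have c: "0 \<le> c" "c \<le> e" "c \<le> labs b"
    using \<open>0 \<le> e\<close> by (simp_all add: c_def)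
  have "s \<le> e - c" if "s \<in> T" for s
  proof -
    have "inf s c \<le> inf (labs s) (labs b)"
      using T_nonneg[OF that] c(3) by (intro inf_mono) simp_all
    also have "\<dots> = 0"
      using T \<open>b \<in> M\<close> that unfolding disj_compl_def by blast
    finally have "inf s c = 0"
      using T_nonneg[OF that] c(1) by (intro order.antisym) simp_all
    then have "s + c = sup s c" using vl.add_eq_inf_sup[of s c] by simp
    also have "\<dots> \<le> e"
      using sup that c(2) unfolding is_sup_of_def by (blast intro: sup_least)
    finally show ?thesis by (simp add: le_diff_eq)
  qed
  then have "e \<le> e - c" using sup unfolding is_sup_of_def by blast
  then have "c \<le> 0" by (simp add: le_diff_eq)
  then have "c = 0" using c(1) by (rule order.antisym)
  then show "inf (labs e) (labs b) = 0" using \<open>0 \<le> e\<close> by (simp add: c_def)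
qed

definition solid_normal_seq :: "'a::{ordered_real_vector,lattice} topology \<Rightarrow> (nat \<Rightarrow> 'a set) \<Rightarrow> bool"
  where "solid_normal_seq \<tau> V \<longleftrightarrow> normal_seq \<tau> V \<and> (\<forall>n. solid (V n))"

lemma normal_seq_nhd0: "normal_seq \<tau> V \<Longrightarrow> nhd0 \<tau> (V n)"
  unfolding normal_seq_def by blast

lemma normal_seq_zero: "normal_seq \<tau> V \<Longrightarrow> 0 \<in> V n"
  using normal_seq_nhd0 nhd0_zero by blast

lemma normal_seq_add:
  assumes "normal_seq \<tau> V" "a \<in> V (Suc n)" "b \<in> V (Suc n)"
  shows "a + b \<in> V n"
  using assms unfolding normal_seq_def by blast

lemma normal_seq_Suc_subset: "normal_seq \<tau> V \<Longrightarrow> V (Suc n) \<subseteq> V n"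
  using normal_seq_add[of \<tau> V _ n 0] normal_seq_zero by fastforce

lemma normal_seq_antimono: "normal_seq \<tau> V \<Longrightarrow> m \<le> n \<Longrightarrow> V n \<subseteq> V m"
  by (rule lift_Suc_antimono_le[of V]) (auto dest: normal_seq_Suc_subset)

lemma normal_seq_sum:
  assumes V: "normal_seq \<tau> V" and a: "\<And>k. a k \<in> V k"
  shows "sum a {Suc p..<n} \<in> V p"
proof -
  have "sum a {Suc p..<Suc p + d} \<in> V p" for d
  proof (induction d arbitrary: p)
    case 0
    show ?case using normal_seq_zero[OF V] by simp
  next
    case (Suc d)
    have "a (Suc p) + sum a {Suc (Suc p)..<Suc (Suc p) + d} \<in> V p"
      using normal_seq_add[OF V a Suc.IH] .
    moreover have "Suc p < Suc p + Suc d" by simp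
    note sum.atLeast_Suc_lessThan[OF this, of a]
    ultimately show ?case by (simp only: add_Suc_shift)
  qed
  from this[of "n - Suc p"] show ?thesis
    by (cases "Suc p \<le> n") (simp_all add: normal_seq_zero[OF V])
qed

lemma solid_normal_seq_Inter:
  assumes "solid_normal_seq \<tau> V"
  shows "solid (\<Inter>n. V n)" "0 \<in> (\<Inter>n. V n)"
    "\<And>a b. a \<in> (\<Inter>n. V n) \<Longrightarrow> b \<in> (\<Inter>n. V n) \<Longrightarrow> a + b \<in> (\<Inter>n. V n)"
proof -
  have V: "normal_seq \<tau> V" "\<And>n. solid (V n)"
    using assms unfolding solid_normal_seq_def by auto
  show "solid (\<Inter>n. V n)" by (rule solid_INT) (rule V(2))
  show "0 \<in> (\<Inter>n. V n)" using normal_seq_zero[OF V(1)] by blast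
  show "a + b \<in> (\<Inter>n. V n)" if "a \<in> (\<Inter>n. V n)" "b \<in> (\<Inter>n. V n)" for a b
    using that by (blast intro: normal_seq_add[OF V(1)])
qed

lemma solid_normal_seq_const_UNIV:
  "linear_topology \<tau> \<Longrightarrow> solid_normal_seq \<tau> (\<lambda>_. UNIV)"
  unfolding solid_normal_seq_def normal_seq_def by (simp add: nhd0_UNIV solid_UNIV)

lemma solid_normal_seq_Int:
  assumes "solid_normal_seq \<tau> V" "solid_normal_seq \<tau> W"
  shows "solid_normal_seq \<tau> (\<lambda>n. V n \<inter> W n)"
  unfolding solid_normal_seq_def normal_seq_def
proof (intro conjI allI subsetI)
  fix n
  show "nhd0 \<tau> (V n \<inter> W n)"
    using assms by (intro nhd0_Int normal_seq_nhd0) (auto simp: solid_normal_seq_def)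
  show "solid (V n \<inter> W n)"
    using assms unfolding solid_normal_seq_def solid_def by blast
  fix x assume "x \<in> {a + b |a b. a \<in> V (Suc n) \<inter> W (Suc n) \<and> b \<in> V (Suc n) \<inter> W (Suc n)}"
  then show "x \<in> V n \<inter> W n"
    using assms normal_seq_add unfolding solid_normal_seq_def by blast
qed

lemma solid_normal_seq_exists:
  fixes \<tau> :: "'a::{ordered_real_vector,lattice} topology"
  assumes "locally_solid \<tau>" "nhd0 \<tau> U"
  shows "\<exists>V. solid_normal_seq \<tau> V \<and> V 0 \<subseteq> U"
proof -
  have lt: "linear_topology \<tau>" using assms(1) by (simp add: locally_solid_def)
  have solid_sub: "\<exists>W. nhd0 \<tau> W \<and> solid W \<and> W \<subseteq> X" if "nhd0 \<tau> X" for X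
    using assms(1) that unfolding locally_solid_def by blast
  have half: "\<exists>W. (nhd0 \<tau> W \<and> solid W) \<and> (\<forall>a\<in>W. \<forall>b\<in>W. a + b \<in> X)"
    if X: "nhd0 \<tau> X" for X
  proof -
    obtain W1 where W1: "nhd0 \<tau> W1" "\<forall>a\<in>W1. \<forall>b\<in>W1. a + b \<in> X"
      using nhd0_half[OF lt X] by blast
    obtain W where "nhd0 \<tau> W" "solid W" "W \<subseteq> W1"
      using solid_sub[OF W1(1)] by blast
    with W1(2) show ?thesis by (intro exI[of _ W]) blast
  qed
  define P where "P (n::nat) W \<longleftrightarrow> nhd0 \<tau> W \<and> solid W \<and> (n = 0 \<longrightarrow> W \<subseteq> U)" for n W
  define Q where "Q (W::'a set) W' \<longleftrightarrow> (\<forall>a\<in>W'. \<forall>b\<in>W'. a + b \<in> W)" for W W'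
  have "\<exists>W. P 0 W" using solid_sub[OF assms(2)] unfolding P_def by blast
  moreover have "\<exists>W'. P (Suc n) W' \<and> Q W W'" if PW: "P n W" for n W
  proof -
    obtain W' where "nhd0 \<tau> W'" "solid W'" "\<forall>a\<in>W'. \<forall>b\<in>W'. a + b \<in> W"
      using half[of W] PW unfolding P_def by blast
    then show ?thesis unfolding P_def Q_def by blast
  qed
  ultimately obtain V where V: "\<And>n. P n (V n)" "\<And>n. Q (V n) (V (Suc n))"
    using dependent_nat_choice[of P "\<lambda>_. Q"] by blast
  then have "solid_normal_seq \<tau> V"
    unfolding solid_normal_seq_def normal_seq_def P_def Q_def by auto
  moreover have "V 0 \<subseteq> U" using V(1)[of 0] unfolding P_def by blast
  ultimately show ?thesis by blast
qed

lemma solid_normal_seq_diagonal: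
  fixes Z :: "nat \<Rightarrow> nat \<Rightarrow> 'a::{ordered_real_vector,lattice} set"
  assumes lt: "linear_topology \<tau>" and Z: "\<And>n. solid_normal_seq \<tau> (Z n)"
    and dec: "\<And>n j. Z (Suc n) j \<subseteq> Z n j"
  shows "\<exists>W. solid_normal_seq \<tau> W \<and> (\<forall>n. Z n (Suc n) \<subseteq> W (Suc n))
    \<and> (\<forall>n. (\<Inter>j. W j) \<subseteq> (\<Inter>j. Z n j))"
proof -
  define W where "W j = (case j of 0 \<Rightarrow> UNIV | Suc n \<Rightarrow> Z n (Suc n))" for j
  have normal: "normal_seq \<tau> (Z n)" and solid: "solid (Z n j)" for n j
    using Z unfolding solid_normal_seq_def by blast+
  have Z_antimono: "Z n j \<subseteq> Z m j" if "m \<le> n" for m n j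
    using lift_Suc_antimono_le[of "\<lambda>n. Z n j", OF dec that] .
  have W_add: "a + b \<in> W j" if "a \<in> W (Suc j)" "b \<in> W (Suc j)" for a b j
  proof (cases j)
    case (Suc m)
    then have "a \<in> Z m (Suc j)" "b \<in> Z m (Suc j)"
      using that Z_antimono[of m "Suc m"] by (auto simp: W_def)
    then show ?thesis using normal_seq_add[OF normal] Suc by (simp add: W_def)
  qed (simp add: W_def)
  have "solid_normal_seq \<tau> W"
    unfolding solid_normal_seq_def normal_seq_def
  proof (intro allI conjI subsetI)
    fix j
    show "nhd0 \<tau> (W j)"
      by (cases j) (simp_all add: W_def nhd0_UNIV[OF lt] normal_seq_nhd0[OF normal])
    show "solid (W j)"
      by (cases j) (simp_all add: W_def solid_UNIV solid)
    show "x \<in> W j" if "x \<in> {a + b |a b. a \<in> W (Suc j) \<and> b \<in> W (Suc j)}" for x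
      using that W_add by blast
  qed
  moreover have "Z n (Suc n) \<subseteq> W (Suc n)" for n by (simp add: W_def)
  moreover have "(\<Inter>j. W j) \<subseteq> (\<Inter>j. Z n j)" for n
  proof (intro subsetI INT_I)
    fix x j assume "x \<in> (\<Inter>j. W j)"
    then have "x \<in> Z (max n j) (Suc (max n j))"
      by (auto simp: W_def dest: spec[of _ "Suc (max n j)"])
    also have "\<dots> \<subseteq> Z n (Suc (max n j))" by (rule Z_antimono) simp
    also have "\<dots> \<subseteq> Z n j" by (rule normal_seq_antimono[OF normal]) simp
    finally show "x \<in> Z n j" .
  qed
  ultimately show ?thesis by blast
qed

section \<open>Order continuity\<close>

lemma directed_set_ideal_interval:
  fixes I :: "'a::{ordered_real_vector,lattice} set"
  assumes I: "solid I" "0 \<in> I" "\<And>a b. a \<in> I \<Longrightarrow> b \<in> I \<Longrightarrow> a + b \<in> I" and "0 \<le> t"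
  shows "directed_set {y \<in> I. 0 \<le> y \<and> y \<le> t} (\<le>)"
proof (rule directed_set_leI)
  show "{y \<in> I. 0 \<le> y \<and> y \<le> t} \<noteq> {}" using I(2) \<open>0 \<le> t\<close> by blast
  fix a b assume "a \<in> {y \<in> I. 0 \<le> y \<and> y \<le> t}" "b \<in> {y \<in> I. 0 \<le> y \<and> y \<le> t}"
  then have a: "a \<in> I" "0 \<le> a" "a \<le> t" and b: "b \<in> I" "0 \<le> b" "b \<le> t" by auto
  have "sup a b \<le> a + b" using a(2) b(2) by (simp add: add_increasing add_increasing2)
  also have "\<dots> = labs (a + b)" using a(2) b(2) by simp
  finally have "sup a b \<in> I"
    using a(2) by (intro solid_nonneg_le_abs[OF I(1) I(3)[OF a(1) b(1)]]) (auto intro: le_supI1)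
  with a b show "\<exists>c\<in>{y \<in> I. 0 \<le> y \<and> y \<le> t}. a \<le> c \<and> b \<le> c"
    by (intro bexI[of _ "sup a b"]) (simp_all add: le_supI1)
qed

lemma is_sup_of_ideal_interval:
  fixes I :: "'a::{ordered_real_vector,lattice} set"
  assumes arch: "archimedean_vl TYPE('a)"
    and I: "solid I" "0 \<in> I" "\<And>a b. a \<in> I \<Longrightarrow> b \<in> I \<Longrightarrow> a + b \<in> I"
    and "0 \<le> t" and perp: "\<And>b. b \<in> disj_compl I \<Longrightarrow> inf t (labs b) = 0"
  shows "is_sup_of {y \<in> I. 0 \<le> y \<and> y \<le> t} t"
  unfolding is_sup_of_def
proof (intro conjI allI impI ballI)
  show "y \<le> t" if "y \<in> {y \<in> I. 0 \<le> y \<and> y \<le> t}" for y using that by simp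
  fix v assume v: "\<forall>y\<in>{y \<in> I. 0 \<le> y \<and> y \<le> t}. y \<le> v"
  define r where "r = t - inf v t"
  have "0 \<le> v" using v I(2) \<open>0 \<le> t\<close> by blast
  then have r: "0 \<le> r" "r \<le> t" using \<open>0 \<le> t\<close> by (simp_all add: r_def)
  have "r \<in> disj_compl I"
    unfolding disj_compl_def
  proof (intro CollectI ballI)
    fix n assume "n \<in> I"
    define c where "c = inf r (labs n)"
    have c: "0 \<le> c" "c \<le> r" "c \<in> I"
      using r(1) by (auto simp: c_def intro: solid_nonneg_le_abs[OF I(1) \<open>n \<in> I\<close>])
    have cI: "real k *\<^sub>R c \<in> I" for k
      by (induction k) (simp_all add: I(2) I(3) c(3) algebra_simps)
    have "real k *\<^sub>R c \<le> t" for k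
    proof (induction k)
      case (Suc k)
      have "real k *\<^sub>R c \<le> inf v t"
        using v cI[of k] c(1) Suc.IH by (simp add: scaleR_nonneg_nonneg)
      then have "real k *\<^sub>R c + c \<le> inf v t + r" using c(2) by (rule add_mono)
      also have "\<dots> = t" by (simp add: r_def)
      finally show ?case by (simp add: algebra_simps)
    qed (simp add: \<open>0 \<le> t\<close>)
    then have "c = 0" by (intro archimedean_vlD[OF arch c(1)])
    then show "inf (labs r) (labs n) = 0" using r(1) by (simp add: c_def)
  qed
  then have "inf t r = 0" using perp[of r] r(1) by simp
  then have "r = 0" using r(2) by (simp add: inf_absorb2)
  then have "t = inf v t" by (simp add: r_def)
  then show "t \<le> v" by (metis inf.cobounded1)
qed

lemma uo_Lebesgue_directed_sup_mem:
  fixes \<tau> :: "'a::{ordered_real_vector,lattice} topology"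
  assumes uo: "uo_Lebesgue \<tau>" and V: "solid_normal_seq \<tau> V"
    and dir: "directed_set S (\<le>)" and sup: "is_sup_of S t" and S: "S \<subseteq> V (Suc j)"
  shows "t \<in> V j"
proof -
  have lt: "linear_topology \<tau>" using uo by (simp add: uo_Lebesgue_def locally_solid_def)
  have normal: "normal_seq \<tau> V" and solid: "solid (V (Suc j))"
    using V unfolding solid_normal_seq_def by blast+
  have "top_conv \<tau> (net_filter S (\<le>)) id t"
    using order_conv_directed_sup[OF dir sup]
    by (intro uo_Lebesgue_top_conv[OF uo] uo_conv_if_order_conv)
  then have "\<forall>\<^sub>F y in net_filter S (\<le>). id y - t \<in> V (Suc j)"
    by (rule top_conv_nhd0[OF lt _ normal_seq_nhd0[OF normal]])
  then obtain y where "y \<in> S" "y - t \<in> V (Suc j)"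
    unfolding eventually_net_filter[OF dir] by auto
  then have "t - y \<in> V (Suc j)" "y \<in> V (Suc j)"
    using solidD[OF solid, of "y - t" "t - y"] S by (auto simp: vl.abs_minus_commute)
  then have "(t - y) + y \<in> V j" by (rule normal_seq_add[OF normal])
  then show ?thesis by simp
qed

lemma normal_seq_Inter_double_disj_compl:
  fixes \<tau> :: "'a::{ordered_real_vector,lattice} topology"
  assumes arch: "archimedean_vl TYPE('a)" and uo: "uo_Lebesgue \<tau>" and V: "solid_normal_seq \<tau> V"
    and "0 \<le> t" and perp: "\<And>b. b \<in> disj_compl (\<Inter>n. V n) \<Longrightarrow> inf t (labs b) = 0"
  shows "t \<in> (\<Inter>n. V n)"
proof (rule INT_I)
  fix j
  let ?S = "{y \<in> (\<Inter>n. V n). 0 \<le> y \<and> y \<le> t}"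
  note N = solid_normal_seq_Inter[OF V]
  show "t \<in> V j"
  proof (rule uo_Lebesgue_directed_sup_mem[OF uo V])
    show "directed_set ?S (\<le>)" by (rule directed_set_ideal_interval[OF N \<open>0 \<le> t\<close>])
    show "is_sup_of ?S t" by (rule is_sup_of_ideal_interval[OF arch N \<open>0 \<le> t\<close> perp])
    show "?S \<subseteq> V (Suc j)" by blast
  qed
qed

section \<open>The carrier\<close>

lemma mem_carrier_top_iff:
  "e \<in> carrier_top \<tau> \<longleftrightarrow> (\<exists>V. solid_normal_seq \<tau> V \<and> e \<in> disj_compl (\<Inter>n. V n))"
  unfolding carrier_top_def solid_normal_seq_def by blast

lemma carrier_top_ideal:
  fixes \<tau> :: "'a::{ordered_real_vector,lattice} topology"
  assumes lt: "linear_topology \<tau>"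
  shows "solid (carrier_top \<tau>)" "0 \<in> carrier_top \<tau>"
    "\<And>a b. a \<in> carrier_top \<tau> \<Longrightarrow> b \<in> carrier_top \<tau> \<Longrightarrow> a + b \<in> carrier_top \<tau>"
proof -
  show "solid (carrier_top \<tau>)"
    unfolding solid_def
  proof (intro ballI allI impI)
    fix x y assume "x \<in> carrier_top \<tau>" "labs y \<le> labs x"
    then obtain V where "solid_normal_seq \<tau> V" "x \<in> disj_compl (\<Inter>n. V n)"
      unfolding mem_carrier_top_iff by blast
    with \<open>labs y \<le> labs x\<close> show "y \<in> carrier_top \<tau>"
      unfolding mem_carrier_top_iff by (blast intro: solidD[OF solid_disj_compl])
  qed
  show "0 \<in> carrier_top \<tau>"
    unfolding mem_carrier_top_iff using solid_normal_seq_const_UNIV[OF lt] by auto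
  fix a b assume "a \<in> carrier_top \<tau>" "b \<in> carrier_top \<tau>"
  then obtain V W where V: "solid_normal_seq \<tau> V" "a \<in> disj_compl (\<Inter>n. V n)"
    and W: "solid_normal_seq \<tau> W" "b \<in> disj_compl (\<Inter>n. W n)"
    unfolding mem_carrier_top_iff by blast
  have "a + b \<in> disj_compl (\<Inter>n. V n \<inter> W n)"
    using V(2) W(2) disj_compl_antimono[of "\<Inter>n. V n \<inter> W n"]
    by (intro disj_compl_add) blast+
  then show "a + b \<in> carrier_top \<tau>"
    unfolding mem_carrier_top_iff using solid_normal_seq_Int[OF V(1) W(1)] by blast
qed

lemma disj_compl_carrier_top:
  fixes \<tau> :: "'a::{ordered_real_vector,lattice} topology"
  assumes arch: "archimedean_vl TYPE('a)" and uo: "uo_Lebesgue \<tau>"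
  shows "disj_compl (carrier_top \<tau>) = {0}"
proof (intro equalityI subsetI)
  fix b assume b: "b \<in> disj_compl (carrier_top \<tau>)"
  have ls: "locally_solid \<tau>" and lt: "linear_topology \<tau>"
    using uo by (simp_all add: uo_Lebesgue_def locally_solid_def)
  have "labs b \<in> (\<Inter>n. V n)" if V: "solid_normal_seq \<tau> V" for V
  proof (rule normal_seq_Inter_double_disj_compl[OF arch uo V])
    fix c assume "c \<in> disj_compl (\<Inter>n. V n)"
    then have "c \<in> carrier_top \<tau>" unfolding mem_carrier_top_iff using V by blast
    then show "inf (labs b) (labs c) = 0" using b unfolding disj_compl_def by blast
  qed simp
  then have "labs b \<in> U" if "nhd0 \<tau> U" for U
    using solid_normal_seq_exists[OF ls that] by blast
  then show "b \<in> {0}"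
    using nhd0_separating[OF lt, of "labs b"] by auto
qed simp

lemma countable_subset_carrier_top:
  fixes \<tau> :: "'a::{ordered_real_vector,lattice} topology"
  assumes lt: "linear_topology \<tau>" and "countable T" and T: "T \<subseteq> carrier_top \<tau>"
  shows "\<exists>W. solid_normal_seq \<tau> W \<and> T \<subseteq> disj_compl (\<Inter>j. W j)"
proof (cases "T = {}")
  case True
  then show ?thesis using solid_normal_seq_const_UNIV[OF lt] by blast
next
  case False
  define t where "t = from_nat_into T"
  have "t i \<in> carrier_top \<tau>" for i
    using T from_nat_into[OF False] unfolding t_def by blast
  then have "\<forall>i. \<exists>V. solid_normal_seq \<tau> V \<and> t i \<in> disj_compl (\<Inter>j. V j)"
    unfolding mem_carrier_top_iff by blast
  then obtain V where "\<forall>i. solid_normal_seq \<tau> (V i) \<and> t i \<in> disj_compl (\<Inter>j. V i j)"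
    by (rule choice[THEN exE])
  then have V: "\<And>i. solid_normal_seq \<tau> (V i)" "\<And>i. t i \<in> disj_compl (\<Inter>j. V i j)"
    by blast+
  define Z where "Z n j = (\<Inter>i\<le>n. V i j)" for n j
  have Z_Suc: "Z (Suc n) = (\<lambda>j. Z n j \<inter> V (Suc n) j)" for n
    by (auto simp: Z_def atMost_Suc)
  have Z: "solid_normal_seq \<tau> (Z n)" for n
  proof (induction n)
    case 0
    then show ?case using V(1)[of 0] by (simp add: Z_def)
  next
    case (Suc n)
    then show ?case unfolding Z_Suc by (rule solid_normal_seq_Int[OF _ V(1)])
  qed
  have dec: "Z (Suc n) j \<subseteq> Z n j" for n j by (simp add: Z_Suc)
  obtain W where W: "solid_normal_seq \<tau> W" "\<And>n. (\<Inter>j. W j) \<subseteq> (\<Inter>j. Z n j)"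
    using solid_normal_seq_diagonal[of \<tau> Z, OF lt Z dec] by blast
  have "t i \<in> disj_compl (\<Inter>j. W j)" for i
  proof -
    have "(\<Inter>j. W j) \<subseteq> (\<Inter>j. V i j)" using W(2)[of i] by (auto simp: Z_def)
    then show ?thesis using V(2)[of i] disj_compl_antimono by blast
  qed
  moreover have "T = range t"
    unfolding t_def using \<open>countable T\<close> False by (simp add: range_from_nat_into)
  ultimately show ?thesis using W(1) by blast
qed

lemma carrier_top_eq_UNIV:
  fixes \<tau> :: "'a::{ordered_real_vector,lattice} topology"
  assumes arch: "archimedean_vl TYPE('a)" and uo: "uo_Lebesgue \<tau>"
    and csp: "countable_sup_property TYPE('a)"
  shows "carrier_top \<tau> = UNIV"
proof (intro equalityI subsetI UNIV_I)
  fix e :: 'a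
  have lt: "linear_topology \<tau>" using uo by (simp add: uo_Lebesgue_def locally_solid_def)
  let ?A = "{y \<in> carrier_top \<tau>. 0 \<le> y \<and> y \<le> labs e}"
  have "inf (labs e) (labs b) = 0" if "b \<in> disj_compl (carrier_top \<tau>)" for b
    using that disj_compl_carrier_top[OF arch uo] by (simp add: inf_absorb2)
  then have "is_sup_of ?A (labs e)"
    by (intro is_sup_of_ideal_interval[OF arch carrier_top_ideal[OF lt]]) simp_all
  then obtain T where T: "T \<subseteq> ?A" "countable T" "is_sup_of T (labs e)"
    using csp unfolding countable_sup_property_def by meson
  then obtain W where W: "solid_normal_seq \<tau> W" "T \<subseteq> disj_compl (\<Inter>j. W j)"
    using countable_subset_carrier_top[OF lt, of T] by blast
  have "labs e \<in> disj_compl (\<Inter>j. W j)"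
  proof (rule disj_compl_is_sup_of[OF W(2)])
    show "0 \<le> s" if "s \<in> T" for s using that T(1) by blast
  qed (simp_all add: T(3))
  then have "e \<in> disj_compl (\<Inter>j. W j)"
    by (rule solidD[OF solid_disj_compl]) simp
  then show "e \<in> carrier_top \<tau>" unfolding mem_carrier_top_iff using W(1) by blast
qed

section \<open>uo-null sequences\<close>

lemma is_sup_of_inf_partial_sums:
  fixes z :: "nat \<Rightarrow> 'a::{ordered_real_vector,lattice}"
  assumes arch: "archimedean_vl TYPE('a)" and z: "\<And>k. 0 \<le> z k" "\<And>k. z k \<le> u"
    and below: "\<And>d. (\<forall>\<^sub>F k in sequentially. z k \<le> d) \<Longrightarrow> w \<le> d"
  shows "is_sup_of (range (\<lambda>n. inf w (sum z {p..<n}))) w"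
  unfolding is_sup_of_def
proof (intro conjI allI impI ballI)
  show "x \<le> w" if "x \<in> range (\<lambda>n. inf w (sum z {p..<n}))" for x
    using that by auto
  fix v assume v: "\<forall>x\<in>range (\<lambda>n. inf w (sum z {p..<n})). x \<le> v"
  have "w - inf v w = 0"
  proof (rule archimedean_eventually_le_descent[OF arch _ _ below])
    show "0 \<le> w - inf v w" by simp
    show "\<forall>\<^sub>F k in sequentially. z k \<le> u" using z(2) by simp
    fix U assume U: "\<forall>\<^sub>F k in sequentially. z k \<le> U" "w \<le> U"
    have step: "z k \<le> U - (w - inf v w)" if "p \<le> k" "z k \<le> U" for k
    proof -
      have "z k \<le> sum z {p..<Suc k}"
        using that(1) z(1) by (intro sum_mono2[of _ "{k}", simplified]) auto
      then have "inf (z k) w \<le> inf w (sum z {p..<Suc k})"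
        by (meson inf_le1 inf_le2 le_infI order_trans)
      also have "\<dots> \<le> v" using v by blast
      finally have "inf (z k) w \<le> inf v w" by simp
      moreover have "z k - inf (z k) w \<le> U - w"
        using that(2) U(2) by (simp add: vl.diff_inf_eq_sup vl.add_sup_distrib_left)
      ultimately have "inf (z k) w + (z k - inf (z k) w) \<le> inf v w + (U - w)"
        by (rule add_mono)
      then show ?thesis by (simp add: algebra_simps)
    qed
    show "\<forall>\<^sub>F k in sequentially. z k \<le> U - (w - inf v w)"
      using eventually_ge_at_top[of p] U(1) by eventually_elim (rule step)
  qed
  then show "w \<le> v" by (metis right_minus_eq inf.cobounded1)
qed

lemma mem_normal_seq_if_below_eventual_bounds:
  fixes \<tau> :: "'a::{ordered_real_vector,lattice} topology" and z :: "nat \<Rightarrow> 'a"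
  assumes arch: "archimedean_vl TYPE('a)" and uo: "uo_Lebesgue \<tau>" and V: "solid_normal_seq \<tau> V"
    and z: "\<And>k. 0 \<le> z k" "\<And>k. z k \<le> u" "\<And>k. z k \<in> V k"
    and "0 \<le> w" and below: "\<And>d. (\<forall>\<^sub>F k in sequentially. z k \<le> d) \<Longrightarrow> w \<le> d"
  shows "w \<in> V j"
proof (rule uo_Lebesgue_directed_sup_mem[OF uo V])
  define g where "g n = inf w (sum z {Suc (Suc j)..<n})" for n
  have normal: "normal_seq \<tau> V" and solid: "solid (V (Suc j))"
    using V unfolding solid_normal_seq_def by blast+
  have g_mono: "g m \<le> g n" if "m \<le> n" for m n
    unfolding g_def using that z(1) by (intro inf_mono order_refl sum_mono2) auto
  show "directed_set (range g) (\<le>)"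
    by (rule directed_set_leI) (auto intro: g_mono[OF max.cobounded1] g_mono[OF max.cobounded2])
  show "is_sup_of (range g) w"
    unfolding g_def by (rule is_sup_of_inf_partial_sums[OF arch z(1,2) below])
  show "range g \<subseteq> V (Suc j)"
  proof clarify
    fix n
    have "sum z {Suc (Suc j)..<n} \<in> V (Suc j)" by (rule normal_seq_sum[OF normal z(3)])
    moreover have "0 \<le> g n" "g n \<le> labs (sum z {Suc (Suc j)..<n})"
      using \<open>0 \<le> w\<close> z(1) by (simp_all add: g_def sum_nonneg le_infI2)
    ultimately show "g n \<in> V (Suc j)" by (rule solid_nonneg_le_abs[OF solid])
  qed
qed

lemma uo_conv_zero_if_normal_seq:
  fixes \<tau> :: "'a::{ordered_real_vector,lattice} topology" and y :: "nat \<Rightarrow> 'a"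
  assumes arch: "archimedean_vl TYPE('a)" and uo: "uo_Lebesgue \<tau>" and V: "solid_normal_seq \<tau> V"
    and y_mem: "\<And>n. y n \<in> V n" and y_disj: "\<And>n. y n \<in> disj_compl (\<Inter>j. V j)"
  shows "uo_conv sequentially y 0"
  unfolding uo_conv_def
proof
  fix e
  define z where "z k = inf (labs (y k)) (labs e)" for k
  have z: "0 \<le> z k" "z k \<le> labs e" "z k \<le> labs (y k)" for k
    by (simp_all add: z_def)
  have z_mem: "z k \<in> V k" for k
    using V y_mem z(1,3) unfolding solid_normal_seq_def by (blast intro: solid_nonneg_le_abs)
  have bound: "\<forall>\<^sub>F k in sequentially. z k \<le> labs e" using z(2) by simp
  have "order_conv sequentially z 0"
  proof (rule order_conv_nonneg_zeroI[OF _ z(1) bound])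
    fix w assume "0 \<le> w" and below: "\<And>d. (\<forall>\<^sub>F k in sequentially. z k \<le> d) \<Longrightarrow> w \<le> d"
    have "w \<in> (\<Inter>j. V j)"
      using mem_normal_seq_if_below_eventual_bounds[OF arch uo V z(1,2) z_mem \<open>0 \<le> w\<close> below]
      by blast
    have disj: "inf (z k) w = 0" for k
    proof (rule order.antisym)
      have "inf (z k) w \<le> inf (labs (y k)) (labs w)"
        using z(3) \<open>0 \<le> w\<close> by (intro inf_mono) simp_all
      also have "\<dots> = 0"
        using y_disj[of k] \<open>w \<in> (\<Inter>j. V j)\<close> unfolding disj_compl_def by blast
      finally show "inf (z k) w \<le> 0" .
    qed (simp add: z(1) \<open>0 \<le> w\<close>)
    show "w = 0"
    proof (rule archimedean_eventually_le_descent[OF arch \<open>0 \<le> w\<close> bound below])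
      fix U assume U: "\<forall>\<^sub>F k in sequentially. z k \<le> U" and "w \<le> U"
      from U show "\<forall>\<^sub>F k in sequentially. z k \<le> U - w"
      proof eventually_elim
        case (elim k)
        have "z k + w = sup (z k) w" using vl.add_eq_inf_sup[of "z k" w] disj by simp
        also have "\<dots> \<le> U" using elim \<open>w \<le> U\<close> by simp
        finally show ?case by (simp add: le_diff_eq)
      qed
    qed
  qed simp
  then show "order_conv sequentially (\<lambda>i. inf (labs (y i - 0)) (labs e)) 0"
    by (simp add: z_def[abs_def])
qed

section \<open>Embedded sequences\<close>

lemma eventually_net_filter_beyond:
  assumes dir: "directed_set I le" and a: "a \<in> I" and ev: "eventually P (net_filter I le)"
  shows "\<exists>b\<in>I. le a b \<and> (\<not> (\<exists>m\<in>I. \<forall>c\<in>I. le c m) \<longrightarrow> \<not> le b a) \<and> P b"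
proof -
  have trans: "le x z" if "x \<in> I" "y \<in> I" "z \<in> I" "le x y" "le y z" for x y z
    using dir that unfolding directed_set_def by blast
  obtain b0 where b0: "b0 \<in> I" "\<forall>c\<in>I. le b0 c \<longrightarrow> P c"
    using ev unfolding eventually_net_filter[OF dir] by blast
  obtain c where c: "c \<in> I" "le a c" "le b0 c"
    using directed_setD[OF dir a b0(1)] by blast
  show ?thesis
  proof (cases "\<exists>m\<in>I. \<forall>d\<in>I. le d m")
    case True
    then show ?thesis using c b0 by blast
  next
    case False
    then obtain d where d: "d \<in> I" "\<not> le d c" using c(1) by blast
    obtain c' where c': "c' \<in> I" "le c c'" "le d c'"
      using directed_setD[OF dir c(1) d(1)] by blast
    have "\<not> le c' a"
      using trans[OF d(1) c'(1) a c'(3)] trans[OF d(1) a c(1) _ c(2)] d(2) by blast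
    moreover have "le a c'" "le b0 c'"
      using trans[OF a c(1) c'(1) c(2) c'(2)] trans[OF b0(1) c(1) c'(1) c(3) c'(2)] .
    ultimately show ?thesis using c'(1) b0(2) by blast
  qed
qed

lemma net_normal_seq_chain:
  fixes \<tau> :: "'a::{ordered_real_vector,lattice} topology" and h :: "'i \<Rightarrow> 'a"
  assumes carrier: "carrier_top \<tau> = UNIV" and dir: "directed_set I le"
    and conv: "\<And>U. nhd0 \<tau> U \<Longrightarrow> eventually (\<lambda>i. h i \<in> U) (net_filter I le)"
  shows "\<exists>\<alpha> Z. \<forall>n. \<alpha> n \<in> I \<and> solid_normal_seq \<tau> (Z n) \<and> h (\<alpha> n) \<in> disj_compl (\<Inter>j. Z n j)
    \<and> le (\<alpha> n) (\<alpha> (Suc n)) \<and> (\<not> (\<exists>m\<in>I. \<forall>c\<in>I. le c m) \<longrightarrow> \<not> le (\<alpha> (Suc n)) (\<alpha> n))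
    \<and> h (\<alpha> (Suc n)) \<in> Z n (Suc n) \<and> (\<forall>j. Z (Suc n) j \<subseteq> Z n j)"
proof -
  let ?nomax = "\<not> (\<exists>m\<in>I. \<forall>c\<in>I. le c m)"
  have carrier': "\<exists>V. solid_normal_seq \<tau> V \<and> e \<in> disj_compl (\<Inter>j. V j)" for e
    using carrier unfolding mem_carrier_top_iff[symmetric] by blast
  define P where "P s \<longleftrightarrow> fst s \<in> I \<and> solid_normal_seq \<tau> (snd s)
    \<and> h (fst s) \<in> disj_compl (\<Inter>j. snd s j)" for s :: "'i \<times> (nat \<Rightarrow> 'a set)"
  define Q where "Q n s s' \<longleftrightarrow> le (fst s) (fst s') \<and> (?nomax \<longrightarrow> \<not> le (fst s') (fst s))
    \<and> h (fst s') \<in> snd s (Suc n) \<and> (\<forall>j. snd s' j \<subseteq> snd s j)" for n s s'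
  have "\<exists>s. P s"
  proof -
    obtain a where "a \<in> I" using dir unfolding directed_set_def by blast
    with carrier'[of "h a"] show ?thesis unfolding P_def by auto
  qed
  moreover have "\<exists>s'. P s' \<and> Q n s s'" if Ps: "P s" for n s
  proof -
    obtain a Z where s: "s = (a, Z)" and "a \<in> I" "solid_normal_seq \<tau> Z"
      using Ps unfolding P_def by (cases s) auto
    then have "eventually (\<lambda>i. h i \<in> Z (Suc n)) (net_filter I le)"
      by (intro conv normal_seq_nhd0) (auto simp: solid_normal_seq_def)
    then obtain b where b: "b \<in> I" "le a b" "?nomax \<longrightarrow> \<not> le b a" "h b \<in> Z (Suc n)"
      using eventually_net_filter_beyond[OF dir \<open>a \<in> I\<close>] by blast
    obtain V where V: "solid_normal_seq \<tau> V" "h b \<in> disj_compl (\<Inter>j. V j)"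
      using carrier' by blast
    have "h b \<in> disj_compl (\<Inter>j. Z j \<inter> V j)"
      using V(2) disj_compl_antimono[of "\<Inter>j. Z j \<inter> V j" "\<Inter>j. V j"] by blast
    then show ?thesis using b s solid_normal_seq_Int[OF \<open>solid_normal_seq \<tau> Z\<close> V(1)]
      unfolding P_def Q_def by (intro exI[of _ "(b, \<lambda>j. Z j \<inter> V j)"]) auto
  qed
  ultimately obtain f where "\<And>n. P (f n)" "\<And>n. Q n (f n) (f (Suc n))"
    using dependent_nat_choice[of "\<lambda>_. P" Q] by blast
  then show ?thesis unfolding P_def Q_def
    by (intro exI[of _ "\<lambda>n. fst (f n)"] exI[of _ "\<lambda>n. snd (f n)"]) blast
qed

lemma embedded_seq_along_normal_seq:
  fixes \<tau> :: "'a::{ordered_real_vector,lattice} topology" and h :: "'i \<Rightarrow> 'a"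
  assumes lt: "linear_topology \<tau>" and carrier: "carrier_top \<tau> = UNIV"
    and dir: "directed_set I le"
    and conv: "\<And>U. nhd0 \<tau> U \<Longrightarrow> eventually (\<lambda>i. h i \<in> U) (net_filter I le)"
  shows "\<exists>\<alpha> W. embedded_seq I le \<alpha> \<and> solid_normal_seq \<tau> W
    \<and> (\<forall>n. h (\<alpha> n) \<in> W n \<and> h (\<alpha> n) \<in> disj_compl (\<Inter>j. W j))"
proof -
  obtain \<alpha> Z where chain: "\<forall>n. \<alpha> n \<in> I \<and> solid_normal_seq \<tau> (Z n)
    \<and> h (\<alpha> n) \<in> disj_compl (\<Inter>j. Z n j) \<and> le (\<alpha> n) (\<alpha> (Suc n))
    \<and> (\<not> (\<exists>m\<in>I. \<forall>c\<in>I. le c m) \<longrightarrow> \<not> le (\<alpha> (Suc n)) (\<alpha> n))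
    \<and> h (\<alpha> (Suc n)) \<in> Z n (Suc n) \<and> (\<forall>j. Z (Suc n) j \<subseteq> Z n j)"
    using net_normal_seq_chain[OF carrier dir conv] by blast
  have Z: "solid_normal_seq \<tau> (Z n)" "Z (Suc n) j \<subseteq> Z n j" for n j
    using chain by blast+
  obtain W where W: "solid_normal_seq \<tau> W" "\<And>n. Z n (Suc n) \<subseteq> W (Suc n)"
    "\<And>n. (\<Inter>j. W j) \<subseteq> (\<Inter>j. Z n j)"
    using solid_normal_seq_diagonal[of \<tau> Z, OF lt Z] by blast
  \<comment> \<open>The first index is dropped: \<open>h (\<alpha> 0)\<close> need not lie in \<open>W 0\<close>.\<close>
  have "embedded_seq I le (\<alpha> \<circ> Suc)"
    using chain unfolding embedded_seq_def by simp
  moreover have "h (\<alpha> (Suc n)) \<in> W n" for n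
    using chain W(2)[of n] normal_seq_Suc_subset[of \<tau> W n] W(1)
    unfolding solid_normal_seq_def by blast
  moreover have "h (\<alpha> (Suc n)) \<in> disj_compl (\<Inter>j. W j)" for n
    using chain disj_compl_antimono[OF W(3)] by blast
  ultimately show ?thesis using W(1) by (intro exI[of _ "\<alpha> \<circ> Suc"] exI[of _ W]) simp
qed

lemma top_conv_net_embedded_seq_uo_conv:
  fixes \<tau> :: "'a::{ordered_real_vector,lattice} topology" and f :: "'i \<Rightarrow> 'a"
  assumes arch: "archimedean_vl TYPE('a)" and uo: "uo_Lebesgue \<tau>"
    and carrier: "carrier_top \<tau> = UNIV"
    and dir: "directed_set I le" and conv: "top_conv \<tau> (net_filter I le) f x"
  shows "\<exists>\<alpha>. embedded_seq I le \<alpha> \<and> uo_conv sequentially (f \<circ> \<alpha>) x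
    \<and> top_conv \<tau> sequentially (f \<circ> \<alpha>) x"
proof -
  have lt: "linear_topology \<tau>" using uo by (simp add: uo_Lebesgue_def locally_solid_def)
  obtain \<alpha> W where \<alpha>: "embedded_seq I le \<alpha>" and W: "solid_normal_seq \<tau> W"
    and mem: "\<And>n. f (\<alpha> n) - x \<in> W n" and disj: "\<And>n. f (\<alpha> n) - x \<in> disj_compl (\<Inter>j. W j)"
    using embedded_seq_along_normal_seq[OF lt carrier dir top_conv_nhd0[OF lt conv]] by blast
  have "uo_conv sequentially (\<lambda>n. f (\<alpha> n) - x) 0"
    by (rule uo_conv_zero_if_normal_seq[OF arch uo W mem disj])
  then have "uo_conv sequentially (f \<circ> \<alpha>) x"
    by (simp add: uo_conv_def)
  with \<alpha> show ?thesis by (blast intro: uo_Lebesgue_top_conv[OF uo])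
qed

lemma net_filter_UNIV_le: "net_filter UNIV (\<le>) = (at_top :: 'a::linorder filter)"
  unfolding net_filter_def at_top_def by (simp add: atLeast_def)

lemma directed_set_UNIV_le: "directed_set (UNIV :: 'a::linorder set) (\<le>)"
  by (rule directed_set_leI) (auto intro: max.cobounded1 max.cobounded2)

lemma embedded_seq_UNIV_strict_mono:
  fixes \<alpha> :: "nat \<Rightarrow> 'a::{linorder,no_top}"
  assumes "embedded_seq UNIV (\<le>) \<alpha>"
  shows "strict_mono \<alpha>"
proof -
  have "\<not> (\<forall>a. a \<le> m)" for m :: 'a using gt_ex[of m] by (auto simp: not_le)
  then have "\<not> (\<exists>m\<in>UNIV. \<forall>a\<in>UNIV. a \<le> (m::'a))" by blast
  then show ?thesis
    using assms unfolding embedded_seq_def strict_mono_Suc_iff by (simp add: not_le)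
qed

lemma top_conv_subseq:
  "top_conv \<tau> sequentially s x \<Longrightarrow> strict_mono r \<Longrightarrow> top_conv \<tau> sequentially (s \<circ> r) x"
  unfolding top_conv_def using eventually_subseq by fastforce

lemma top_conv_sequentially_if_subseqs:
  fixes s :: "nat \<Rightarrow> 'a"
  assumes "\<And>r::nat \<Rightarrow> nat. strict_mono r \<Longrightarrow>
    \<exists>r'::nat \<Rightarrow> nat. strict_mono r' \<and> top_conv \<tau> sequentially (s \<circ> r \<circ> r') x"
  shows "top_conv \<tau> sequentially s x"
  unfolding top_conv_def
proof (intro allI impI)
  fix U assume U: "openin \<tau> U \<and> x \<in> U"
  show "\<forall>\<^sub>F n in sequentially. s n \<in> U"
  proof (rule ccontr)
    assume "\<not> (\<forall>\<^sub>F n in sequentially. s n \<in> U)"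
    then have "infinite {n. s n \<notin> U}"
      by (simp add: cofinite_eq_sequentially[symmetric] eventually_cofinite)
    then obtain r :: "nat \<Rightarrow> nat" where r: "strict_mono r" "\<And>n. s (r n) \<notin> U"
      using infinite_enumerate by blast
    then obtain r' where "top_conv \<tau> sequentially (s \<circ> r \<circ> r') x" using assms[OF r(1)] by blast
    then have "\<forall>\<^sub>F n in sequentially. s (r (r' n)) \<in> U" using U unfolding top_conv_def by auto
    with r(2) show False by (simp add: eventually_False_sequentially)
  qed
qed

lemma top_conv_sequentially_iff_subseq_uo_conv:
  fixes \<tau> :: "'a::{ordered_real_vector,lattice} topology" and s :: "nat \<Rightarrow> 'a"
  assumes arch: "archimedean_vl TYPE('a)" and uo: "uo_Lebesgue \<tau>"
    and carrier: "carrier_top \<tau> = UNIV"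
  shows "top_conv \<tau> sequentially s x \<longleftrightarrow> (\<forall>r::nat \<Rightarrow> nat. strict_mono r \<longrightarrow>
    (\<exists>r'::nat \<Rightarrow> nat. strict_mono r' \<and> uo_conv sequentially (s \<circ> r \<circ> r') x))"
proof
  assume conv: "top_conv \<tau> sequentially s x"
  show "\<forall>r::nat \<Rightarrow> nat. strict_mono r \<longrightarrow>
    (\<exists>r'::nat \<Rightarrow> nat. strict_mono r' \<and> uo_conv sequentially (s \<circ> r \<circ> r') x)"
  proof (intro allI impI)
    fix r :: "nat \<Rightarrow> nat" assume "strict_mono r"
    then have "top_conv \<tau> (net_filter UNIV (\<le>)) (s \<circ> r) x"
      using conv by (simp add: net_filter_UNIV_le top_conv_subseq)
    then obtain r' where "embedded_seq UNIV (\<le>) r'" "uo_conv sequentially (s \<circ> r \<circ> r') x"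
      using top_conv_net_embedded_seq_uo_conv[OF arch uo carrier directed_set_UNIV_le] by blast
    then show "\<exists>r'::nat \<Rightarrow> nat. strict_mono r' \<and> uo_conv sequentially (s \<circ> r \<circ> r') x"
      by (blast dest: embedded_seq_UNIV_strict_mono)
  qed
next
  assume "\<forall>r::nat \<Rightarrow> nat. strict_mono r \<longrightarrow>
    (\<exists>r'::nat \<Rightarrow> nat. strict_mono r' \<and> uo_conv sequentially (s \<circ> r \<circ> r') x)"
  then show "top_conv \<tau> sequentially s x"
    by (meson top_conv_sequentially_if_subseqs uo_Lebesgue_top_conv[OF uo])
qed

theorem theorem5p8:
  fixes \<tau> :: "'a::{ordered_real_vector,lattice} topology"
  assumes "archimedean_vl TYPE('a)"
    and "locally_solid \<tau>"
    and "uo_Lebesgue \<tau>"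
    and "carrier_top \<tau> = UNIV \<or> countable_sup_property TYPE('a)"
  shows "(\<forall>(I::'i set) le (f::'i \<Rightarrow> 'a) x.
            directed_set I le \<and> top_conv \<tau> (net_filter I le) f x \<longrightarrow>
            (\<exists>\<alpha>. embedded_seq I le \<alpha> \<and> uo_conv sequentially (f \<circ> \<alpha>) x
                  \<and> top_conv \<tau> sequentially (f \<circ> \<alpha>) x))
       \<and> (\<forall>(s::nat \<Rightarrow> 'a) x.
            top_conv \<tau> sequentially s x \<longleftrightarrow>
            (\<forall>r::nat \<Rightarrow> nat. strict_mono r \<longrightarrow> (\<exists>r'::nat \<Rightarrow> nat. strict_mono r' \<and> uo_conv sequentially (s \<circ> r \<circ> r') x)))"
proof -
  \<comment> \<open>\<open>locally_solid \<tau>\<close> is part of \<open>uo_Lebesgue \<tau>\<close>.\<close>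
  have carrier: "carrier_top \<tau> = UNIV"
    using assms(4) carrier_top_eq_UNIV[OF assms(1,3)] by blast
  show ?thesis
    using top_conv_net_embedded_seq_uo_conv[OF assms(1,3) carrier]
      top_conv_sequentially_iff_subseq_uo_conv[OF assms(1,3) carrier]
    by blast
qed

end
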